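(* Let $H_t=\mathbb{E}(Y_tY_t')$ (expectation under the annealed law $\mathbb{P}$) and $H^\xi_t=\mathbb{E}_\xi(Y_tY_t')$ (expectation under the quenched law $\mathbb{P}_\xi$), where $Y_t'$ is the transpose. Then $$\frac1t H_t\to\eta^2,$$ and for $\Pi$-almost every $\xi$, $$\frac1t H^\xi_t\to\eta^2,$$ as $t\to\infty$, where $(\eta^2)_{ij}=\sum_{u\in\mathbb{Z}^n}(u_i-b_i)(u_j-b_j)\bar P(u)$.
   Context: Let $\mathbb{S}$ be a finite set and $\pi$ a probability measure on $\mathbb{S}$. The environment $\xi=\{\xi_t(x): x\in\mathbb{Z}^n, t\in\mathbb{Z}^+\}$ consists of i.i.d. $\mathbb{S}$-valued random variables with law $\pi$; $\Pi$ denotes its law. Let $P_0$ be a probability distribution on $\mathbb{Z}^n$ and $c:\mathbb{Z}^n\times\mathbb{S}\to\mathbb{R}$ such that: $0\le P_0(u)+c(u,s)\le 1$ for all $u,s$; $\sum_{u}c(u,s)=0$ for all $s$; $\sum_{s}c(u,s)\pi(s)=0$ for all $u$; $P_0$ and $c$ have bounded range; and there is $b^c\in\mathbb{R}^n$ with $\sum_u u\,c(u,s)=b^c$ for all $s$. Given $\xi$, $(X_t)$ is the Markov chain on $\mathbb{Z}^n$ (from a fixed starting point) with $\mathbb{P}(X_{t+1}=y\mid X_t=x,\xi)=P_0(y-x)+c(y-x,\xi_t(x))$; $\mathbb{P}_\xi$ denotes this quenched law and $\mathbb{P}=\int\mathbb{P}_\xi\,\Pi(d\xi)$ the annealed law.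 Let $\bar P(u)=P_0(u)+\sum_s\pi(s)c(u,s)$, $b^0=\sum_u uP_0(u)$, $b=b^0+b^c$, $Y_t=X_t-tb$ (a column vector). *)

theory Defs
  imports "HOL-Probability.Probability"
begin

definition rvec :: "int ^ 'n \<Rightarrow> real ^ 'n" where
  "rvec u = (\<chi> i. real_of_int (u $ i))"

definition jump_pmf :: "(int ^ 'n \<Rightarrow> real) \<Rightarrow> (int ^ 'n \<Rightarrow> 's \<Rightarrow> real) \<Rightarrow> 's \<Rightarrow> (int ^ 'n) pmf" where
  "jump_pmf P0 c s = embed_pmf (\<lambda>u. P0 u + c u s)"

(* quenched law of X_t: transition x \<rightarrow> y with probability P0(y-x)+c(y-x, xi_t(x)) *)
fun quenched_dist :: "(int ^ 'n \<Rightarrow> real) \<Rightarrow> (int ^ 'n \<Rightarrow> 's \<Rightarrow> real) \<Rightarrow> int ^ 'n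
    \<Rightarrow> (nat \<times> (int ^ 'n) \<Rightarrow> 's) \<Rightarrow> nat \<Rightarrow> (int ^ 'n) pmf" where
  "quenched_dist P0 c x0 \<xi> 0 = return_pmf x0"
| "quenched_dist P0 c x0 \<xi> (Suc t) =
     bind_pmf (quenched_dist P0 c x0 \<xi> t)
       (\<lambda>x. map_pmf (\<lambda>u. x + u) (jump_pmf P0 c (\<xi> (t, x))))"

definition env_law :: "'s pmf \<Rightarrow> (nat \<times> (int ^ 'n) \<Rightarrow> 's) measure" where
  "env_law \<pi> = PiM UNIV (\<lambda>_. measure_pmf \<pi>)"

definition annealed_dist :: "(int ^ 'n \<Rightarrow> real) \<Rightarrow> (int ^ 'n \<Rightarrow> 's \<Rightarrow> real) \<Rightarrow> int ^ 'n
    \<Rightarrow> 's pmf \<Rightarrow> nat \<Rightarrow> (int ^ 'n) measure" where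
  "annealed_dist P0 c x0 \<pi> t = env_law \<pi> \<bind> (\<lambda>\<xi>. measure_pmf (quenched_dist P0 c x0 \<xi> t))"

definition Yvec :: "real ^ 'n \<Rightarrow> nat \<Rightarrow> int ^ 'n \<Rightarrow> real ^ 'n" where
  "Yvec b t x = rvec x - real t *\<^sub>R b"

definition second_moment :: "real ^ 'n \<Rightarrow> nat \<Rightarrow> (int ^ 'n) measure \<Rightarrow> real ^ 'n ^ 'n" where
  "second_moment b t M = (\<chi> i j. \<integral>x. (Yvec b t x $ i) * (Yvec b t x $ j) \<partial>M)"

end

theory Submission
  imports Defs "HOL-Library.Discrete_Functions"
begin

text \<open>Whatever the environment, every jump has mean \<open>b\<close>; so, conditionally on the past, the
  increment of \<open>Y\<^sub>t Y\<^sub>t'\<close> has mean the covariance \<open>G(\<xi>\<^sub>t(X\<^sub>t))\<close> of the jump law at the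
  current site. Hence the quenched second moment equals \<open>Y\<^sub>0 Y\<^sub>0' + t \<eta>\<^sup>2 + S\<^sub>t\<close>, where
  \<open>S\<^sub>t = (\<Sum>k<t. E\<^sub>\<xi> G(\<xi>\<^sub>k(X\<^sub>k)) - \<eta>\<^sup>2)\<close>. The layer \<open>\<xi>\<^sub>k\<close> is independent of everything
  the walk has seen before time \<open>k\<close>, so the summands of \<open>S\<^sub>t\<close> are bounded, centred and
  orthogonal: \<open>E S\<^sub>t = 0\<close>, which is the annealed claim, and \<open>E S\<^sub>t\<^sup>2 = O(t)\<close>. Borel--Cantelli
  along the squares and the bounded increments of \<open>S\<^sub>t\<close> then give \<open>S\<^sub>t / t \<rightarrow> 0\<close> almost surely.\<close>

lemma finite_rvec_bounded: "finite {u::int^'n. norm (rvec u) \<le> R}"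
proof -
  define N where "N = \<lceil>R\<rceil>"
  have "{u::int^'n. norm (rvec u) \<le> R} \<subseteq> vec_lambda ` (PiE UNIV (\<lambda>_. {-N..N}))"
  proof
    fix u :: "int^'n" assume "u \<in> {u. norm (rvec u) \<le> R}"
    then have bound: "\<bar>real_of_int (u $ i)\<bar> \<le> R" for i
      using component_le_norm_cart[of "rvec u" i] by (simp add: rvec_def)
    have "u $ i \<in> {-N..N}" for i
    proof -
      have "real_of_int (u $ i) \<le> real_of_int N" "- real_of_int N \<le> real_of_int (u $ i)"
        using bound[of i] le_of_int_ceiling[of R] unfolding N_def by linarith+
      then show ?thesis by simp
    qed
    then have "vec_nth u \<in> PiE UNIV (\<lambda>_. {-N..N})" by auto
    then show "u \<in> vec_lambda ` (PiE UNIV (\<lambda>_. {-N..N}))"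
      by (metis image_eqI vec_nth_inverse)
  qed
  moreover have "finite (vec_lambda ` (PiE UNIV (\<lambda>_. {-N..N})) :: (int^'n) set)"
    by (intro finite_imageI finite_PiE) auto
  ultimately show ?thesis by (rule finite_subset)
qed

lemma rvec_add: "rvec (x + y) = rvec x + rvec y"
  by (simp add: rvec_def vec_eq_iff)

lemma infsum_eq_sum_superset:
  assumes "finite A" "\<And>x. x \<notin> A \<Longrightarrow> f x = 0"
  shows "infsum f UNIV = sum f A"
proof -
  have "infsum f UNIV = infsum f A"
    by (rule infsum_cong_neutral) (auto simp: assms(2))
  then show ?thesis using assms(1) by simp
qed

lemma abs_diff_le_of_increments:
  fixes S :: "nat \<Rightarrow> real"
  assumes "\<And>t. \<bar>S (Suc t) - S t\<bar> \<le> C"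
  shows "\<bar>S (a + d) - S a\<bar> \<le> real d * C"
proof (induction d)
  case (Suc d)
  have "\<bar>S (a + Suc d) - S a\<bar> \<le> \<bar>S (Suc (a + d)) - S (a + d)\<bar> + \<bar>S (a + d) - S a\<bar>" by simp
  also have "\<dots> \<le> C + real d * C" using assms Suc.IH by (intro add_mono) auto
  finally show ?case by (simp add: algebra_simps)
qed simp

text \<open>Between consecutive squares \<open>m\<^sup>2 \<le> t < (m+1)\<^sup>2\<close> the sequence moves by at most \<open>2 m C\<close>,
  which is negligible against \<open>t\<close>.\<close>
lemma LIMSEQ_div_of_LIMSEQ_squares:
  fixes S :: "nat \<Rightarrow> real"
  assumes squares: "(\<lambda>m. S (m\<^sup>2) / real (m\<^sup>2)) \<longlonglongrightarrow> 0"
    and increments: "\<And>t. \<bar>S (Suc t) - S t\<bar> \<le> C"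
  shows "(\<lambda>t. S t / real t) \<longlonglongrightarrow> 0"
proof -
  define bound where "bound m = \<bar>S (m\<^sup>2) / real (m\<^sup>2)\<bar> + 2 * C / real m" for m
  have "filterlim floor_sqrt at_top sequentially"
    unfolding filterlim_at_top
  proof
    fix Z :: nat
    show "\<forall>\<^sub>F t in sequentially. Z \<le> floor_sqrt t"
      using eventually_ge_at_top[of "Z\<^sup>2"] by eventually_elim (rule le_floor_sqrtI)
  qed
  moreover have "bound \<longlonglongrightarrow> 0"
    unfolding bound_def
    by (intro tendsto_add_zero tendsto_rabs_zero squares
        real_tendsto_divide_at_top[OF tendsto_const filterlim_real_sequentially])
  ultimately have "(\<lambda>t. bound (floor_sqrt t)) \<longlonglongrightarrow> 0"
    by (rule filterlim_compose[rotated])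
  moreover have "norm (S t / real t) \<le> bound (floor_sqrt t)" if "t \<ge> 1" for t
  proof -
    define m where "m = floor_sqrt t"
    have m_pos: "m \<ge> 1" using that by (simp add: m_def Suc_le_eq)
    have sq_le: "m\<^sup>2 \<le> t" and lt_sq: "t < (Suc m)\<^sup>2"
      by (simp_all add: m_def Suc_floor_sqrt_power2_gt)
    have C_nonneg: "0 \<le> C" using increments[of 0] by linarith
    have "\<bar>S t - S (m\<^sup>2)\<bar> \<le> real (t - m\<^sup>2) * C"
      using abs_diff_le_of_increments[where S=S, OF increments, of "m\<^sup>2" "t - m\<^sup>2"] sq_le by simp
    also have "\<dots> \<le> real (2 * m) * C"
      using lt_sq C_nonneg by (intro mult_right_mono) (auto simp: power2_eq_square)
    finally have "\<bar>S t\<bar> \<le> \<bar>S (m\<^sup>2)\<bar> + 2 * real m * C" by simp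
    then have "\<bar>S t\<bar> / real t \<le> (\<bar>S (m\<^sup>2)\<bar> + 2 * real m * C) / real (m\<^sup>2)"
      using sq_le m_pos by (intro frac_le) auto
    also have "\<dots> = bound m"
      using m_pos by (simp add: bound_def abs_divide add_divide_distrib power2_eq_square)
    finally show ?thesis by (simp add: m_def)
  qed
  then have "\<forall>\<^sub>F t in sequentially. norm (S t / real t) \<le> bound (floor_sqrt t)"
    by (intro eventually_sequentiallyI)
  ultimately show ?thesis by (rule Lim_null_comparison[rotated])
qed

lemma AE_LIMSEQ_zero_of_summable_integral:
  fixes X :: "nat \<Rightarrow> 'a \<Rightarrow> real"
  assumes meas: "\<And>m. X m \<in> borel_measurable M"
    and nonneg: "\<And>m x. 0 \<le> X m x"
    and integrable: "\<And>m. integrable M (X m)"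
    and summable: "summable (\<lambda>m. \<integral>x. X m x \<partial>M)"
  shows "AE x in M. (\<lambda>m. X m x) \<longlonglongrightarrow> 0"
proof -
  have ennreal_meas: "(\<lambda>x. ennreal (X m x)) \<in> borel_measurable M" for m
    using meas by measurable
  have "(\<integral>\<^sup>+x. (\<Sum>m. ennreal (X m x)) \<partial>M) = (\<Sum>m. \<integral>\<^sup>+x. ennreal (X m x) \<partial>M)"
    by (rule nn_integral_suminf) (rule ennreal_meas)
  also have "\<dots> = (\<Sum>m. ennreal (\<integral>x. X m x \<partial>M))"
    by (intro suminf_cong nn_integral_eq_integral integrable) (simp add: nonneg)
  also have "\<dots> = ennreal (\<Sum>m. \<integral>x. X m x \<partial>M)"
    by (rule suminf_ennreal2[OF _ summable]) (simp add: nonneg)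
  finally have "(\<integral>\<^sup>+x. (\<Sum>m. ennreal (X m x)) \<partial>M) \<noteq> \<infinity>" by simp
  then have "AE x in M. (\<Sum>m. ennreal (X m x)) \<noteq> \<infinity>"
    by (intro nn_integral_PInf_AE borel_measurable_suminf_order ennreal_meas)
  then show ?thesis
  proof eventually_elim
    case (elim x)
    then have "summable (\<lambda>m. X m x)"
      by (intro summable_suminf_not_top) (simp_all add: nonneg)
    then show ?case by (rule summable_LIMSEQ_zero)
  qed
qed

text \<open>A strong law of large numbers: \<open>L\<^sup>2\<close> control along the squares is summable, and bounded
  increments interpolate between them.\<close>
lemma (in prob_space) AE_LIMSEQ_div_zero_of_second_moment:
  fixes S :: "nat \<Rightarrow> 'a \<Rightarrow> real"
  assumes meas: "\<And>t. S t \<in> borel_measurable M"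
    and start: "\<And>x. S 0 x = 0"
    and increments: "\<And>t x. \<bar>S (Suc t) x - S t x\<bar> \<le> C"
    and second_moment: "\<And>t. (\<integral>x. (S t x)\<^sup>2 \<partial>M) \<le> real t * D"
  shows "AE x in M. (\<lambda>t. S t x / real t) \<longlonglongrightarrow> 0"
proof -
  define X where "X m x = (S (m\<^sup>2) x / real (m\<^sup>2))\<^sup>2" for m x
  have C_nonneg: "0 \<le> C" using increments[of 0] by (meson abs_ge_zero order_trans)
  have growth: "\<bar>S t x\<bar> \<le> real t * C" for t x
    using abs_diff_le_of_increments[of "\<lambda>t. S t x" C 0 t] increments start by simp
  have X_meas: "X m \<in> borel_measurable M" for m
    unfolding X_def using meas by measurable
  have X_integrable: "integrable M (X m)" for m
  proof (rule integrable_const_bound[where B="C\<^sup>2"])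
    have "\<bar>S (m\<^sup>2) x / real (m\<^sup>2)\<bar> \<le> C" for x
      using growth[of "m\<^sup>2" x] C_nonneg by (cases "m = 0") (auto simp: abs_divide field_simps)
    then show "AE x in M. norm (X m x) \<le> C\<^sup>2"
      using C_nonneg by (simp add: X_def power2_le_iff_abs_le)
  qed (rule X_meas)
  have X_integral: "(\<integral>x. X m x \<partial>M) \<le> D * inverse (real m ^ 2)" for m
  proof -
    define n where "n = m\<^sup>2"
    have "(\<integral>x. X m x \<partial>M) = (\<integral>x. (S n x)\<^sup>2 \<partial>M) / (real n)\<^sup>2"
      by (simp add: X_def n_def power_divide)
    also have "\<dots> \<le> real n * D / (real n)\<^sup>2"
      by (intro divide_right_mono second_moment) simp
    also have "\<dots> = D * inverse (real m ^ 2)"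
      by (simp add: n_def power2_eq_square field_simps)
    finally show ?thesis .
  qed
  have "summable (\<lambda>m. \<integral>x. X m x \<partial>M)"
  proof (rule summable_comparison_test)
    show "\<exists>N. \<forall>m\<ge>N. norm (\<integral>x. X m x \<partial>M) \<le> D * inverse (real m ^ 2)"
      using X_integral by (auto simp: X_def integral_nonneg_AE)
    show "summable (\<lambda>m. D * inverse (real m ^ 2))"
      by (intro summable_mult inverse_power_summable) simp
  qed
  then have "AE x in M. (\<lambda>m. X m x) \<longlonglongrightarrow> 0"
    by (intro AE_LIMSEQ_zero_of_summable_integral X_meas X_integrable) (simp add: X_def)
  then show ?thesis
  proof eventually_elim
    case (elim x)
    then have "(\<lambda>m. sqrt (X m x)) \<longlonglongrightarrow> 0"
      using tendsto_real_sqrt by fastforce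
    then have "(\<lambda>m. \<bar>S (m\<^sup>2) x / real (m\<^sup>2)\<bar>) \<longlonglongrightarrow> 0"
      by (simp add: X_def)
    then have "(\<lambda>m. S (m\<^sup>2) x / real (m\<^sup>2)) \<longlonglongrightarrow> 0"
      by (simp only: tendsto_rabs_zero_iff)
    then show ?case
      by (rule LIMSEQ_div_of_LIMSEQ_squares) (rule increments)
  qed
qed

text \<open>If \<open>\<phi>\<close> only reads the coordinates in \<open>K\<close>, then \<open>\<phi>\<close> and the coordinate at \<open>z \<notin> K\<close> are
  independent, so a centred function of that coordinate is orthogonal to \<open>\<phi>\<close>.\<close>
lemma integral_PiM_mult_centred_coordinate:
  fixes p :: "'a pmf" and \<phi> :: "('i \<Rightarrow> 'a) \<Rightarrow> real" and g :: "'a \<Rightarrow> real"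
  assumes K: "finite K" "z \<notin> K"
    and \<phi>_meas: "\<phi> \<in> borel_measurable (PiM UNIV (\<lambda>_. measure_pmf p))"
    and \<phi>_bounded: "\<And>\<xi>. \<bar>\<phi> \<xi>\<bar> \<le> B"
    and \<phi>_local: "\<And>\<xi> \<xi>'. (\<And>w. w \<in> K \<Longrightarrow> \<xi> w = \<xi>' w) \<Longrightarrow> \<phi> \<xi> = \<phi> \<xi>'"
    and g_bounded: "\<And>y. \<bar>g y\<bar> \<le> B'"
    and g_centred: "measure_pmf.expectation p g = 0"
  shows "(\<integral>\<xi>. \<phi> \<xi> * g (\<xi> z) \<partial>PiM UNIV (\<lambda>_. measure_pmf p)) = 0"
proof -
  interpret product_prob_space "\<lambda>_::'i. measure_pmf p" UNIV
    by unfold_locales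
  define L where "L = insert z K"
  define Q where "Q = PiM L (\<lambda>_::'i. measure_pmf p)"
  define extend :: "('i \<Rightarrow> 'a) \<Rightarrow> ('i \<Rightarrow> 'a)"
    where "extend \<eta> = (\<lambda>w. if w \<in> L then \<eta> w else undefined)" for \<eta>
  define \<Psi> where "\<Psi> \<eta> = \<phi> (extend \<eta>) * g (\<eta> z)" for \<eta>
  have extend_meas: "extend \<in> measurable Q (PiM UNIV (\<lambda>_. measure_pmf p))"
    unfolding extend_def Q_def
  proof (rule measurable_PiM_single')
    fix i :: 'i
    show "(\<lambda>\<eta>. if i \<in> L then \<eta> i else undefined) \<in> measurable (PiM L (\<lambda>_. measure_pmf p)) (measure_pmf p)"
      by (cases "i \<in> L") (auto intro: measurable_component_singleton)
  qed (auto simp: space_PiM)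
  have "(\<lambda>\<eta>. \<eta> z) \<in> measurable Q (measure_pmf p)"
    unfolding Q_def L_def by (rule measurable_component_singleton) simp
  then have "(\<lambda>\<eta>. g (\<eta> z)) \<in> borel_measurable Q"
    by (rule measurable_compose) simp
  then have \<Psi>_meas: "\<Psi> \<in> borel_measurable Q"
    unfolding \<Psi>_def by (intro borel_measurable_times measurable_compose[OF extend_meas \<phi>_meas])
  have \<Psi>_integrable: "integrable Q \<Psi>"
  proof -
    interpret Q: prob_space Q
      unfolding Q_def by (rule prob_space_PiM) (rule prob_space_measure_pmf)
    have "\<bar>\<Psi> \<eta>\<bar> \<le> B * B'" for \<eta>
      unfolding \<Psi>_def abs_mult
      by (intro mult_mono \<phi>_bounded g_bounded) (auto intro: order_trans[OF abs_ge_zero \<phi>_bounded])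
    then show ?thesis by (intro Q.integrable_const_bound[where B="B * B'"] \<Psi>_meas) auto
  qed
  have "(\<integral>\<xi>. \<phi> \<xi> * g (\<xi> z) \<partial>PiM UNIV (\<lambda>_. measure_pmf p)) =
        (\<integral>\<xi>. \<Psi> (restrict \<xi> L) \<partial>PiM UNIV (\<lambda>_. measure_pmf p))"
  proof (intro Bochner_Integration.integral_cong refl)
    fix \<xi> :: "'i \<Rightarrow> 'a"
    have "\<phi> \<xi> = \<phi> (extend (restrict \<xi> L))"
      by (rule \<phi>_local) (auto simp: extend_def L_def)
    then show "\<phi> \<xi> * g (\<xi> z) = \<Psi> (restrict \<xi> L)"
      by (simp add: \<Psi>_def L_def)
  qed
  also have "\<dots> = (\<integral>\<eta>. \<Psi> \<eta> \<partial>distr (PiM UNIV (\<lambda>_. measure_pmf p)) Q (\<lambda>\<xi>. restrict \<xi> L))"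
    by (rule integral_distr[symmetric, OF _ \<Psi>_meas])
       (unfold Q_def, rule measurable_restrict_subset, simp)
  also have "distr (PiM UNIV (\<lambda>_. measure_pmf p)) Q (\<lambda>\<xi>. restrict \<xi> L) = Q"
    unfolding Q_def by (rule distr_PiM_restrict_finite) (auto simp: L_def K)
  also have "(\<integral>\<eta>. \<Psi> \<eta> \<partial>Q) =
      (\<integral>\<eta>. (\<integral>y. \<Psi> (\<eta>(z := y)) \<partial>measure_pmf p) \<partial>PiM K (\<lambda>_. measure_pmf p))"
    unfolding Q_def L_def
    by (rule product_integral_insert[OF K]) (use \<Psi>_integrable in \<open>simp add: Q_def L_def\<close>)
  also have "\<dots> = 0"
  proof -
    have "\<phi> (extend (\<eta>(z := y))) = \<phi> (extend \<eta>)" for \<eta> y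
      by (rule \<phi>_local) (use K in \<open>auto simp: extend_def L_def\<close>)
    then have "\<Psi> (\<eta>(z := y)) = \<phi> (extend \<eta>) * g y" for \<eta> y
      by (simp add: \<Psi>_def)
    then show ?thesis by (simp add: g_centred)
  qed
  finally show ?thesis .
qed

lemma measurable_measure_pmf_finite_support:
  assumes A: "finite A" "\<And>\<xi>. set_pmf (k \<xi>) \<subseteq> A"
    and pmf_meas: "\<And>x. (\<lambda>\<xi>. pmf (k \<xi>) x) \<in> borel_measurable M"
  shows "(\<lambda>\<xi>. measure_pmf (k \<xi>)) \<in> measurable M (subprob_algebra (count_space UNIV))"
proof (rule measurable_subprob_algebra)
  fix B :: "'a set"
  have "emeasure (measure_pmf (k \<xi>)) B = (\<Sum>x\<in>B \<inter> A. ennreal (pmf (k \<xi>) x))" for \<xi>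
  proof -
    have "emeasure (measure_pmf (k \<xi>)) B = emeasure (measure_pmf (k \<xi>)) (B \<inter> A)"
      by (rule emeasure_eq_AE) (use A(2)[of \<xi>] in \<open>auto simp: AE_measure_pmf_iff\<close>)
    then show ?thesis by (simp add: emeasure_measure_pmf_finite A(1))
  qed
  then show "(\<lambda>\<xi>. emeasure (measure_pmf (k \<xi>)) B) \<in> borel_measurable M"
    using pmf_meas by simp
qed (auto intro: prob_space_imp_subprob_space prob_space_measure_pmf)

lemma integral_bind_pmf_finite_support:
  fixes f :: "'b \<Rightarrow> real"
  assumes "prob_space M"
    and k_meas: "(\<lambda>\<xi>. measure_pmf (k \<xi>)) \<in> measurable M (subprob_algebra (count_space UNIV))"
    and A: "finite A" "\<And>\<xi>. set_pmf (k \<xi>) \<subseteq> A"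
  shows "(\<integral>x. f x \<partial>(M \<bind> (\<lambda>\<xi>. measure_pmf (k \<xi>)))) = (\<integral>\<xi>. measure_pmf.expectation (k \<xi>) f \<partial>M)"
proof -
  interpret prob_space M by fact
  define f' where "f' x = (if x \<in> A then f x else 0)" for x
  have sets_bind: "sets (M \<bind> (\<lambda>\<xi>. measure_pmf (k \<xi>))) = sets (count_space UNIV)"
    by (rule sets_bind[OF _ not_empty]) simp
  have "AE x in M \<bind> (\<lambda>\<xi>. measure_pmf (k \<xi>)). x \<in> A"
    by (subst AE_bind[OF k_meas]) (use A(2) in \<open>auto simp: AE_measure_pmf_iff\<close>)
  then have "(\<integral>x. f x \<partial>(M \<bind> (\<lambda>\<xi>. measure_pmf (k \<xi>)))) = (\<integral>x. f' x \<partial>(M \<bind> (\<lambda>\<xi>. measure_pmf (k \<xi>))))"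
    by (intro integral_cong_AE) (auto simp: f'_def measurable_cong_sets[OF sets_bind refl])
  also have "\<dots> = (\<integral>\<xi>. measure_pmf.expectation (k \<xi>) f' \<partial>M)"
  proof (rule integral_bind[OF _ _ k_meas, where B="\<Sum>x\<in>A. \<bar>f x\<bar>" and B'=1])
    show "\<bar>f' x\<bar> \<le> (\<Sum>x\<in>A. \<bar>f x\<bar>)" for x
      by (auto simp: f'_def A(1) intro: member_le_sum)
  qed (auto simp: measure_pmf.emeasure_space_1 finite_measure_axioms)
  also have "\<dots> = (\<integral>\<xi>. measure_pmf.expectation (k \<xi>) f \<partial>M)"
    by (intro Bochner_Integration.integral_cong integral_cong_AE refl)
       (use A(2) in \<open>auto simp: f'_def AE_measure_pmf_iff\<close>)
  finally show ?thesis .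
qed

lemma LIMSEQ_affine_div:
  fixes S :: "nat \<Rightarrow> real"
  assumes "(\<lambda>t. S t / real t) \<longlonglongrightarrow> 0"
  shows "(\<lambda>t. (a + real t * e + S t) / real t) \<longlonglongrightarrow> e"
proof -
  have "(\<lambda>t. a * inverse (real t) + e + S t / real t) \<longlonglongrightarrow> a * 0 + e + 0"
    by (intro tendsto_intros assms lim_inverse_n)
  moreover have "\<forall>\<^sub>F t in sequentially.
      a * inverse (real t) + e + S t / real t = (a + real t * e + S t) / real t"
    using eventually_gt_at_top[of "0::nat"] by eventually_elim (simp add: field_simps)
  ultimately show ?thesis by (simp add: tendsto_cong)
qed

locale rwre =
  fixes \<pi> :: "'s::finite pmf"
    and P0 :: "int ^ 'n \<Rightarrow> real"
    and c :: "int ^ 'n \<Rightarrow> 's \<Rightarrow> real"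
    and x0 :: "int ^ 'n"
    and F :: "(int ^ 'n) set"
    and b :: "real ^ 'n"
  assumes finite_F: "finite F"
    and set_pmf_jump: "set_pmf (jump_pmf P0 c s) \<subseteq> F"
    and mean_jump: "(\<Sum>u\<in>F. pmf (jump_pmf P0 c s) u *\<^sub>R rvec u) = b"
begin

abbreviation walk :: "(nat \<times> (int ^ 'n) \<Rightarrow> 's) \<Rightarrow> nat \<Rightarrow> (int ^ 'n) pmf" where
  "walk \<xi> t \<equiv> quenched_dist P0 c x0 \<xi> t"

abbreviation \<Omega> :: "(nat \<times> (int ^ 'n) \<Rightarrow> 's) measure" where
  "\<Omega> \<equiv> env_law \<pi>"

lemma prob_space_env: "prob_space \<Omega>"
  unfolding env_law_def by (rule prob_space_PiM) (rule prob_space_measure_pmf)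

lemma measurable_env_coordinate: "(\<lambda>\<xi>. h (\<xi> w) :: real) \<in> borel_measurable \<Omega>"
proof -
  have "(\<lambda>\<xi>. \<xi> w) \<in> measurable \<Omega> (measure_pmf \<pi>)"
    unfolding env_law_def by (rule measurable_component_singleton) simp
  then show ?thesis by (rule measurable_compose) simp
qed

fun reach :: "nat \<Rightarrow> (int ^ 'n) set" where
  "reach 0 = {x0}"
| "reach (Suc t) = (\<lambda>(x, u). x + u) ` (reach t \<times> F)"

text \<open>The environment sites that the walk can have consulted before time \<open>t\<close>.\<close>
definition past :: "nat \<Rightarrow> (nat \<times> (int ^ 'n)) set" where
  "past t = (SIGMA m:{..<t}. reach m)"

lemma finite_reach: "finite (reach t)"
  by (induction t) (auto simp: finite_F)

lemma finite_past: "finite (past t)"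
  unfolding past_def by (intro finite_SigmaI finite_lessThan finite_reach)

lemma past_mono: "m \<le> t \<Longrightarrow> past m \<subseteq> past t"
  unfolding past_def by auto

lemma set_pmf_walk: "set_pmf (walk \<xi> t) \<subseteq> reach t"
proof (induction t)
  case (Suc t)
  show ?case
  proof
    fix y assume "y \<in> set_pmf (walk \<xi> (Suc t))"
    then obtain x u where "x \<in> set_pmf (walk \<xi> t)" "u \<in> set_pmf (jump_pmf P0 c (\<xi> (t, x)))"
      and y: "y = x + u"
      by (auto simp: set_bind_pmf)
    then have "(x, u) \<in> reach t \<times> F" using Suc.IH set_pmf_jump by blast
    then show "y \<in> reach (Suc t)" unfolding y by force
  qed
qed simp

lemma walk_cong_past:
  "(\<And>w. w \<in> past t \<Longrightarrow> \<xi> w = \<xi>' w) \<Longrightarrow> walk \<xi> t = walk \<xi>' t"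
proof (induction t)
  case (Suc t)
  have "walk \<xi> t = walk \<xi>' t"
    using Suc.prems past_mono[of t "Suc t"] by (intro Suc.IH) auto
  moreover have "\<xi> (t, x) = \<xi>' (t, x)" if "x \<in> set_pmf (walk \<xi>' t)" for x
    using that set_pmf_walk[of \<xi>' t] Suc.prems by (auto simp: past_def)
  ultimately show ?case
    by (simp only: quenched_dist.simps) (intro bind_pmf_cong; simp)
qed simp

lemma expectation_walk:
  "measure_pmf.expectation (walk \<xi> t) f = (\<Sum>x\<in>reach t. pmf (walk \<xi> t) x * f x)"
  by (subst integral_measure_pmf[OF finite_reach]) (use set_pmf_walk in auto)

lemma sum_pmf_walk: "(\<Sum>x\<in>reach t. pmf (walk \<xi> t) x) = 1"
  using expectation_walk[of \<xi> t "\<lambda>_. 1"] by simp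

lemma pmf_walk_Suc:
  "pmf (walk \<xi> (Suc t)) y =
     (\<Sum>x\<in>reach t. pmf (walk \<xi> t) x * pmf (jump_pmf P0 c (\<xi> (t, x))) (y - x))"
proof -
  have "pmf (map_pmf (\<lambda>u. x + u) p) y = pmf p (y - x)" for x and p :: "(int ^ 'n) pmf"
    using pmf_map_inj'[of "\<lambda>u. x + u" p "y - x"] by (simp add: inj_def)
  then show ?thesis by (simp add: pmf_bind expectation_walk)
qed

lemma measurable_pmf_walk: "(\<lambda>\<xi>. pmf (walk \<xi> t) y) \<in> borel_measurable \<Omega>"
proof (induction t arbitrary: y)
  case (Suc t)
  show ?case unfolding pmf_walk_Suc
    by (intro borel_measurable_sum borel_measurable_times Suc measurable_env_coordinate)
qed simp

lemma measurable_walk: "(\<lambda>\<xi>. measure_pmf (walk \<xi> t)) \<in> measurable \<Omega> (subprob_algebra (count_space UNIV))"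
  by (rule measurable_measure_pmf_finite_support[OF finite_reach set_pmf_walk measurable_pmf_walk])

definition jump_cov :: "'n \<Rightarrow> 'n \<Rightarrow> 's \<Rightarrow> real" where
  "jump_cov i j s = (\<Sum>u\<in>F. pmf (jump_pmf P0 c s) u * ((rvec u $ i - b $ i) * (rvec u $ j - b $ j)))"

lemma sum_pmf_jump: "(\<Sum>u\<in>F. pmf (jump_pmf P0 c s) u) = 1"
  using integral_measure_pmf[OF finite_F, of "jump_pmf P0 c s" "\<lambda>_. 1::real"] set_pmf_jump
  by auto

lemma sum_pmf_jump_centred: "(\<Sum>u\<in>F. pmf (jump_pmf P0 c s) u * (rvec u $ k - b $ k)) = 0"
proof -
  have "(\<Sum>u\<in>F. pmf (jump_pmf P0 c s) u * rvec u $ k) = b $ k"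
    using arg_cong[OF mean_jump[of s], of "\<lambda>v. v $ k"] by simp
  then show ?thesis
    by (simp add: right_diff_distrib sum_subtractf sum_pmf_jump flip: sum_distrib_right)
qed

text \<open>Every jump law has mean \<open>b\<close>, so the cross terms vanish.\<close>
lemma expectation_jump_product:
  "measure_pmf.expectation (jump_pmf P0 c s)
      (\<lambda>u. Yvec b (Suc t) (x + u) $ i * Yvec b (Suc t) (x + u) $ j)
    = Yvec b t x $ i * Yvec b t x $ j + jump_cov i j s"
proof -
  define p where "p u = pmf (jump_pmf P0 c s) u" for u
  define y where "y k = Yvec b t x $ k" for k
  define d where "d u k = rvec u $ k - b $ k" for u k
  have Y_Suc: "Yvec b (Suc t) (x + u) $ k = y k + d u k" for u k
    by (simp add: y_def d_def Yvec_def rvec_add algebra_simps)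
  have "measure_pmf.expectation (jump_pmf P0 c s)
      (\<lambda>u. Yvec b (Suc t) (x + u) $ i * Yvec b (Suc t) (x + u) $ j)
    = (\<Sum>u\<in>F. p u * ((y i + d u i) * (y j + d u j)))"
    by (subst integral_measure_pmf[OF finite_F]) (use set_pmf_jump in \<open>auto simp: p_def Y_Suc\<close>)
  also have "\<dots> = y i * y j * (\<Sum>u\<in>F. p u) + y i * (\<Sum>u\<in>F. p u * d u j)
      + y j * (\<Sum>u\<in>F. p u * d u i) + (\<Sum>u\<in>F. p u * (d u i * d u j))"
    by (simp add: sum.distrib sum_distrib_left algebra_simps)
  also have "\<dots> = y i * y j + jump_cov i j s"
    using sum_pmf_jump[of s] sum_pmf_jump_centred[of s]
    by (simp add: p_def d_def jump_cov_def)
  finally show ?thesis by (simp add: y_def)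
qed

lemma second_moment_walk_Suc:
  "second_moment b (Suc t) (walk \<xi> (Suc t)) $ i $ j
     = second_moment b t (walk \<xi> t) $ i $ j
       + measure_pmf.expectation (walk \<xi> t) (\<lambda>x. jump_cov i j (\<xi> (t, x)))"
proof -
  have "second_moment b (Suc t) (walk \<xi> (Suc t)) $ i $ j
      = (\<Sum>x\<in>reach t. pmf (walk \<xi> t) x * (Yvec b t x $ i * Yvec b t x $ j + jump_cov i j (\<xi> (t, x))))"
    unfolding second_moment_def quenched_dist.simps
    by (subst pmf_expectation_bind[OF finite_reach])
       (auto simp: set_pmf_walk expectation_jump_product intro: finite_subset[OF set_pmf_jump finite_F])
  also have "\<dots> = second_moment b t (walk \<xi> t) $ i $ j
      + measure_pmf.expectation (walk \<xi> t) (\<lambda>x. jump_cov i j (\<xi> (t, x)))"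
    by (simp add: second_moment_def expectation_walk distrib_left sum.distrib)
  finally show ?thesis .
qed

text \<open>\<open>mean_cov\<close> is the matrix \<open>\<eta>\<^sup>2\<close> and \<open>cum_fluct\<close> the process \<open>S\<^sub>t\<close> of the proof idea.\<close>
definition mean_cov :: "'n \<Rightarrow> 'n \<Rightarrow> real" where
  "mean_cov i j = (\<Sum>s\<in>UNIV. pmf \<pi> s * jump_cov i j s)"

definition fluct :: "'n \<Rightarrow> 'n \<Rightarrow> nat \<Rightarrow> (nat \<times> (int ^ 'n) \<Rightarrow> 's) \<Rightarrow> real" where
  "fluct i j k \<xi> = measure_pmf.expectation (walk \<xi> k) (\<lambda>x. jump_cov i j (\<xi> (k, x)) - mean_cov i j)"

definition cum_fluct :: "'n \<Rightarrow> 'n \<Rightarrow> nat \<Rightarrow> (nat \<times> (int ^ 'n) \<Rightarrow> 's) \<Rightarrow> real" where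
  "cum_fluct i j t \<xi> = (\<Sum>k<t. fluct i j k \<xi>)"

lemma second_moment_walk:
  "second_moment b t (walk \<xi> t) $ i $ j
     = rvec x0 $ i * rvec x0 $ j + real t * mean_cov i j + cum_fluct i j t \<xi>"
proof (induction t)
  case 0
  show ?case by (simp add: second_moment_def Yvec_def cum_fluct_def)
next
  case (Suc t)
  have "measure_pmf.expectation (walk \<xi> t) (\<lambda>x. jump_cov i j (\<xi> (t, x)))
      = mean_cov i j + fluct i j t \<xi>"
    by (simp add: fluct_def expectation_walk right_diff_distrib sum_subtractf sum_pmf_walk
                  flip: sum_distrib_right)
  with Suc show ?case
    unfolding second_moment_walk_Suc by (simp add: cum_fluct_def algebra_simps)
qed

definition fluct_bound :: "'n \<Rightarrow> 'n \<Rightarrow> real" where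
  "fluct_bound i j = (\<Sum>s\<in>UNIV. \<bar>jump_cov i j s - mean_cov i j\<bar>)"

lemma abs_centred_cov_le: "\<bar>jump_cov i j s - mean_cov i j\<bar> \<le> fluct_bound i j"
  unfolding fluct_bound_def by (rule member_le_sum) auto

lemma expectation_centred_cov: "measure_pmf.expectation \<pi> (\<lambda>s. jump_cov i j s - mean_cov i j) = 0"
  by (subst integral_measure_pmf[of UNIV])
     (auto simp: mean_cov_def right_diff_distrib sum_subtractf sum_pmf_eq_1 simp flip: sum_distrib_right)

lemma fluct_eq_sum:
  "fluct i j k \<xi> = (\<Sum>x\<in>reach k. pmf (walk \<xi> k) x * (jump_cov i j (\<xi> (k, x)) - mean_cov i j))"
  unfolding fluct_def by (rule expectation_walk)

lemma abs_fluct_le: "\<bar>fluct i j k \<xi>\<bar> \<le> fluct_bound i j"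
proof -
  have "\<bar>fluct i j k \<xi>\<bar> \<le> (\<Sum>x\<in>reach k. pmf (walk \<xi> k) x * fluct_bound i j)"
    unfolding fluct_eq_sum
    by (rule order_trans[OF sum_abs sum_mono]) (simp add: abs_mult mult_left_mono abs_centred_cov_le)
  also have "\<dots> = fluct_bound i j" by (simp add: sum_pmf_walk flip: sum_distrib_right)
  finally show ?thesis .
qed

lemma measurable_fluct: "fluct i j k \<in> borel_measurable \<Omega>"
proof -
  have "fluct i j k = (\<lambda>\<xi>. \<Sum>x\<in>reach k. pmf (walk \<xi> k) x * (jump_cov i j (\<xi> (k, x)) - mean_cov i j))"
    by (rule ext) (rule fluct_eq_sum)
  also have "\<dots> \<in> borel_measurable \<Omega>"
    by (intro borel_measurable_sum borel_measurable_times measurable_pmf_walk measurable_env_coordinate)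
  finally show ?thesis .
qed

lemma fluct_cong_past:
  assumes "\<And>w. w \<in> past (Suc k) \<Longrightarrow> \<xi> w = \<xi>' w"
  shows "fluct i j k \<xi> = fluct i j k \<xi>'"
proof -
  have "walk \<xi> k = walk \<xi>' k"
    using assms past_mono[of k "Suc k"] by (intro walk_cong_past) auto
  moreover have "\<xi> (k, x) = \<xi>' (k, x)" if "x \<in> reach k" for x
    using assms that by (auto simp: past_def)
  ultimately show ?thesis unfolding fluct_eq_sum by (intro sum.cong) auto
qed

text \<open>The fluctuation at time \<open>k\<close> reads the environment at time \<open>k\<close>, which is independent of
  the past and centred: the fluctuations are martingale differences.\<close>
lemma integral_mult_fluct_eq_0:
  assumes \<phi>_meas: "\<phi> \<in> borel_measurable \<Omega>"
    and \<phi>_bounded: "\<And>\<xi>. \<bar>\<phi> \<xi>\<bar> \<le> B"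
    and \<phi>_past: "\<And>\<xi> \<xi>'. (\<And>w. w \<in> past k \<Longrightarrow> \<xi> w = \<xi>' w) \<Longrightarrow> \<phi> \<xi> = \<phi> \<xi>'"
  shows "(\<integral>\<xi>. \<phi> \<xi> * fluct i j k \<xi> \<partial>\<Omega>) = 0"
proof -
  interpret prob_space \<Omega> by (rule prob_space_env)
  define \<psi> where "\<psi> x \<xi> = \<phi> \<xi> * pmf (walk \<xi> k) x" for x \<xi>
  have \<psi>_meas: "\<psi> x \<in> borel_measurable \<Omega>" for x
    unfolding \<psi>_def by (intro borel_measurable_times \<phi>_meas measurable_pmf_walk)
  have \<psi>_bounded: "\<bar>\<psi> x \<xi>\<bar> \<le> B" for x \<xi>
  proof -
    have "\<bar>\<phi> \<xi>\<bar> * pmf (walk \<xi> k) x \<le> B * 1"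
      by (intro mult_mono \<phi>_bounded pmf_le_1) (auto intro: order_trans[OF abs_ge_zero \<phi>_bounded])
    then show ?thesis by (simp add: \<psi>_def abs_mult)
  qed
  have "(\<integral>\<xi>. \<phi> \<xi> * fluct i j k \<xi> \<partial>\<Omega>)
      = (\<integral>\<xi>. (\<Sum>x\<in>reach k. \<psi> x \<xi> * (jump_cov i j (\<xi> (k, x)) - mean_cov i j)) \<partial>\<Omega>)"
    by (simp add: fluct_eq_sum \<psi>_def sum_distrib_left mult.assoc)
  also have "\<dots> = (\<Sum>x\<in>reach k. \<integral>\<xi>. \<psi> x \<xi> * (jump_cov i j (\<xi> (k, x)) - mean_cov i j) \<partial>\<Omega>)"
  proof (rule Bochner_Integration.integral_sum)
    fix x
    have "\<bar>\<psi> x \<xi> * (jump_cov i j (\<xi> (k, x)) - mean_cov i j)\<bar> \<le> B * fluct_bound i j" for \<xi>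
      unfolding abs_mult
      by (intro mult_mono \<psi>_bounded abs_centred_cov_le) (auto intro: order_trans[OF abs_ge_zero \<psi>_bounded])
    then show "integrable \<Omega> (\<lambda>\<xi>. \<psi> x \<xi> * (jump_cov i j (\<xi> (k, x)) - mean_cov i j))"
      by (intro integrable_const_bound[where B="B * fluct_bound i j"] AE_I2
          borel_measurable_times \<psi>_meas measurable_env_coordinate) simp
  qed
  also have "\<dots> = 0"
  proof (intro sum.neutral ballI)
    fix x
    show "(\<integral>\<xi>. \<psi> x \<xi> * (jump_cov i j (\<xi> (k, x)) - mean_cov i j) \<partial>\<Omega>) = 0"
      unfolding env_law_def
    proof (rule integral_PiM_mult_centred_coordinate[OF finite_past])
      show "(k, x) \<notin> past k" by (simp add: past_def)
      show "\<psi> x \<in> borel_measurable (PiM UNIV (\<lambda>_. measure_pmf \<pi>))"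
        using \<psi>_meas by (simp add: env_law_def)
      show "\<psi> x \<xi> = \<psi> x \<xi>'" if "\<And>w. w \<in> past k \<Longrightarrow> \<xi> w = \<xi>' w" for \<xi> \<xi>'
        using \<phi>_past[OF that] walk_cong_past[OF that] by (simp add: \<psi>_def)
    qed (fact \<psi>_bounded abs_centred_cov_le expectation_centred_cov)+
  qed
  finally show ?thesis .
qed

lemma measurable_cum_fluct: "cum_fluct i j t \<in> borel_measurable \<Omega>"
proof -
  have "(\<lambda>\<xi>. \<Sum>k<t. fluct i j k \<xi>) \<in> borel_measurable \<Omega>"
    by (intro borel_measurable_sum measurable_fluct)
  then show ?thesis by (simp add: cum_fluct_def[abs_def])
qed

lemma abs_cum_fluct_le: "\<bar>cum_fluct i j t \<xi>\<bar> \<le> real t * fluct_bound i j"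
proof -
  have "\<bar>cum_fluct i j t \<xi>\<bar> \<le> (\<Sum>k<t. fluct_bound i j)"
    unfolding cum_fluct_def by (rule order_trans[OF sum_abs sum_mono]) (rule abs_fluct_le)
  then show ?thesis by simp
qed

lemma integrable_env_bounded:
  fixes f :: "(nat \<times> (int ^ 'n) \<Rightarrow> 's) \<Rightarrow> real"
  assumes "f \<in> borel_measurable \<Omega>" "\<And>\<xi>. \<bar>f \<xi>\<bar> \<le> B"
  shows "integrable \<Omega> f"
proof -
  interpret prob_space \<Omega> by (rule prob_space_env)
  show ?thesis using assms by (intro integrable_const_bound[where B=B] AE_I2) auto
qed

lemma integral_cum_fluct: "(\<integral>\<xi>. cum_fluct i j t \<xi> \<partial>\<Omega>) = 0"
proof -
  have "(\<integral>\<xi>. cum_fluct i j t \<xi> \<partial>\<Omega>) = (\<Sum>k<t. \<integral>\<xi>. 1 * fluct i j k \<xi> \<partial>\<Omega>)"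
    unfolding cum_fluct_def
    by (simp, rule Bochner_Integration.integral_sum)
       (rule integrable_env_bounded[OF measurable_fluct abs_fluct_le])
  also have "\<dots> = 0"
    by (intro sum.neutral ballI integral_mult_fluct_eq_0[where B=1]) auto
  finally show ?thesis .
qed

text \<open>Orthogonality of the increments makes the second moment grow only linearly.\<close>
lemma integral_cum_fluct_sq_le: "(\<integral>\<xi>. (cum_fluct i j t \<xi>)\<^sup>2 \<partial>\<Omega>) \<le> real t * (fluct_bound i j)\<^sup>2"
proof (induction t)
  case 0
  show ?case by (simp add: cum_fluct_def)
next
  case (Suc t)
  interpret prob_space \<Omega> by (rule prob_space_env)
  let ?S = "cum_fluct i j t" and ?A = "fluct i j t" and ?C = "fluct_bound i j"
  have C_nonneg: "0 \<le> ?C" using abs_fluct_le by (meson abs_ge_zero order_trans)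
  have "cum_fluct i j t \<xi> = cum_fluct i j t \<xi>'" if "\<And>w. w \<in> past t \<Longrightarrow> \<xi> w = \<xi>' w" for \<xi> \<xi>'
    unfolding cum_fluct_def
  proof (intro sum.cong refl fluct_cong_past)
    fix k w assume "k \<in> {..<t}" "w \<in> past (Suc k)"
    then have "w \<in> past t" using past_mono[of "Suc k" t] by auto
    then show "\<xi> w = \<xi>' w" by (rule that)
  qed
  then have orthogonal: "(\<integral>\<xi>. ?S \<xi> * ?A \<xi> \<partial>\<Omega>) = 0"
    by (intro integral_mult_fluct_eq_0[OF measurable_cum_fluct abs_cum_fluct_le]) blast
  have S_sq: "integrable \<Omega> (\<lambda>\<xi>. (?S \<xi>)\<^sup>2)"
    using abs_cum_fluct_le C_nonneg
    by (intro integrable_env_bounded[where B="(real t * ?C)\<^sup>2"] borel_measurable_power measurable_cum_fluct)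
       (simp add: power2_le_iff_abs_le)
  have SA: "integrable \<Omega> (\<lambda>\<xi>. ?S \<xi> * ?A \<xi>)"
    using abs_cum_fluct_le abs_fluct_le C_nonneg
    by (intro integrable_env_bounded[where B="real t * ?C * ?C"] borel_measurable_times
        measurable_cum_fluct measurable_fluct) (simp add: abs_mult mult_mono)
  have A_sq: "integrable \<Omega> (\<lambda>\<xi>. (?A \<xi>)\<^sup>2)"
    using abs_fluct_le C_nonneg
    by (intro integrable_env_bounded[where B="?C\<^sup>2"] borel_measurable_power measurable_fluct)
       (simp add: power2_le_iff_abs_le)
  have "(\<integral>\<xi>. (cum_fluct i j (Suc t) \<xi>)\<^sup>2 \<partial>\<Omega>)
      = (\<integral>\<xi>. (?S \<xi>)\<^sup>2 + 2 * (?S \<xi> * ?A \<xi>) + (?A \<xi>)\<^sup>2 \<partial>\<Omega>)"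
    by (simp add: cum_fluct_def power2_eq_square algebra_simps)
  also have "\<dots> = (\<integral>\<xi>. (?S \<xi>)\<^sup>2 \<partial>\<Omega>) + (\<integral>\<xi>. (?A \<xi>)\<^sup>2 \<partial>\<Omega>)"
    using S_sq SA A_sq orthogonal by simp
  also have "(\<integral>\<xi>. (?A \<xi>)\<^sup>2 \<partial>\<Omega>) \<le> (\<integral>\<xi>. ?C\<^sup>2 \<partial>\<Omega>)"
    using A_sq abs_fluct_le C_nonneg
    by (intro Bochner_Integration.integral_mono) (auto simp: power2_le_iff_abs_le)
  finally show ?case using Suc.IH by (simp add: prob_space algebra_simps)
qed

lemma AE_cum_fluct_div: "AE \<xi> in \<Omega>. (\<lambda>t. cum_fluct i j t \<xi> / real t) \<longlonglongrightarrow> 0"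
proof -
  interpret prob_space \<Omega> by (rule prob_space_env)
  show ?thesis
    by (rule AE_LIMSEQ_div_zero_of_second_moment[where C="fluct_bound i j",
          OF measurable_cum_fluct _ _ integral_cum_fluct_sq_le])
       (simp_all add: cum_fluct_def abs_fluct_le)
qed

lemma second_moment_annealed:
  "second_moment b t (annealed_dist P0 c x0 \<pi> t) $ i $ j
     = rvec x0 $ i * rvec x0 $ j + real t * mean_cov i j"
proof -
  interpret prob_space \<Omega> by (rule prob_space_env)
  have "second_moment b t (annealed_dist P0 c x0 \<pi> t) $ i $ j
      = (\<integral>\<xi>. second_moment b t (walk \<xi> t) $ i $ j \<partial>\<Omega>)"
    unfolding second_moment_def annealed_dist_def
    by (simp add: integral_bind_pmf_finite_support[OF prob_space_env measurable_walk finite_reach set_pmf_walk])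
  also have "\<dots> = (\<integral>\<xi>. (rvec x0 $ i * rvec x0 $ j + real t * mean_cov i j) + cum_fluct i j t \<xi> \<partial>\<Omega>)"
    by (simp add: second_moment_walk)
  also have "\<dots> = rvec x0 $ i * rvec x0 $ j + real t * mean_cov i j"
    using integrable_env_bounded[OF measurable_cum_fluct abs_cum_fluct_le]
    by (simp add: integral_cum_fluct prob_space)
  finally show ?thesis .
qed

theorem second_moment_limits:
  "(\<lambda>t. (1 / real t) *\<^sub>R second_moment b t (annealed_dist P0 c x0 \<pi> t)) \<longlonglongrightarrow> (\<chi> i j. mean_cov i j) \<and>
   (AE \<xi> in \<Omega>. (\<lambda>t. (1 / real t) *\<^sub>R second_moment b t (walk \<xi> t)) \<longlonglongrightarrow> (\<chi> i j. mean_cov i j))"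
proof
  show "(\<lambda>t. (1 / real t) *\<^sub>R second_moment b t (annealed_dist P0 c x0 \<pi> t)) \<longlonglongrightarrow> (\<chi> i j. mean_cov i j)"
    by (intro vec_tendstoI)
       (simp add: second_moment_annealed LIMSEQ_affine_div[where S="\<lambda>_. 0", simplified])
  have "AE \<xi> in \<Omega>. \<forall>i j. (\<lambda>t. cum_fluct i j t \<xi> / real t) \<longlonglongrightarrow> 0"
    by (intro eventually_all_finite AE_cum_fluct_div)
  then show "AE \<xi> in \<Omega>. (\<lambda>t. (1 / real t) *\<^sub>R second_moment b t (walk \<xi> t)) \<longlonglongrightarrow> (\<chi> i j. mean_cov i j)"
  proof eventually_elim
    case (elim \<xi>)
    show ?case
      by (intro vec_tendstoI) (simp add: second_moment_walk LIMSEQ_affine_div elim)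
  qed
qed

end

lemma pmf_jump_pmf:
  assumes nonneg: "\<And>u. 0 \<le> P0 u + c u s"
    and F: "finite F" "\<And>u. u \<notin> F \<Longrightarrow> P0 u + c u s = 0"
    and total: "(\<Sum>u\<in>F. P0 u + c u s) = 1"
  shows "pmf (jump_pmf P0 c s) u = P0 u + c u s"
proof -
  have "(\<integral>\<^sup>+x. ennreal (P0 x + c x s) \<partial>count_space UNIV) = (\<Sum>x\<in>F. ennreal (P0 x + c x s))"
    by (rule nn_integral_count_space') (use F nonneg in auto)
  also have "\<dots> = 1"
    using total nonneg by (subst sum_ennreal) auto
  finally show ?thesis
    unfolding jump_pmf_def by (subst pmf_embed_pmf) (use nonneg in auto)
qed

lemma sum_mixture_swap:
  fixes \<pi> :: "'s::finite pmf"
  shows "(\<Sum>u\<in>F. D u * (P0 u + (\<Sum>s\<in>UNIV. pmf \<pi> s * c u s)))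
       = (\<Sum>s\<in>UNIV. pmf \<pi> s * (\<Sum>u\<in>F. (P0 u + c u s) * D u))"
proof -
  have "(\<Sum>s\<in>UNIV. pmf \<pi> s * (\<Sum>u\<in>F. (P0 u + c u s) * D u))
      = (\<Sum>u\<in>F. D u * (P0 u * (\<Sum>s\<in>UNIV. pmf \<pi> s) + (\<Sum>s\<in>UNIV. pmf \<pi> s * c u s)))"
    by (simp add: sum_distrib_left sum_distrib_right sum.distrib algebra_simps sum.swap[of _ UNIV F])
  then show ?thesis by (simp add: sum_pmf_eq_1)
qed

lemma finite_jump_support:
  assumes "\<exists>R. \<forall>u. P0 u \<noteq> 0 \<longrightarrow> norm (rvec u) \<le> R"
    and "\<exists>R. \<forall>u s. c u s \<noteq> 0 \<longrightarrow> norm (rvec u) \<le> R"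
  shows "finite {u::int ^ 'n. P0 u \<noteq> 0 \<or> (\<exists>s. c u s \<noteq> 0)}"
proof -
  obtain R1 R2 where "\<forall>u. P0 u \<noteq> 0 \<longrightarrow> norm (rvec u) \<le> R1"
    and "\<forall>u s. c u s \<noteq> 0 \<longrightarrow> norm (rvec u) \<le> R2"
    using assms by blast
  then have "{u. P0 u \<noteq> 0 \<or> (\<exists>s. c u s \<noteq> 0)} \<subseteq> {u. norm (rvec u) \<le> max R1 R2}" by force
  then show ?thesis by (rule finite_subset[OF _ finite_rvec_bounded])
qed

theorem lemma3p6:
  fixes \<pi> :: "'s::finite pmf"
    and P0 :: "int ^ 'n \<Rightarrow> real"
    and c :: "int ^ 'n \<Rightarrow> 's \<Rightarrow> real"
    and x0 :: "int ^ 'n"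
    and bc :: "real ^ 'n"
  assumes P0_nonneg: "\<And>u. P0 u \<ge> 0"
    and P0_sum: "(\<Sum>\<^sub>\<infinity>u. P0 u) = 1"
    and Pc_bounds: "\<And>u s. 0 \<le> P0 u + c u s \<and> P0 u + c u s \<le> 1"
    and c_sum: "\<And>s. (\<Sum>\<^sub>\<infinity>u. c u s) = 0"
    and c_mean: "\<And>u. (\<Sum>s\<in>UNIV. c u s * pmf \<pi> s) = 0"
    and P0_range: "\<exists>R. \<forall>u. P0 u \<noteq> 0 \<longrightarrow> norm (rvec u) \<le> R"
    and c_range: "\<exists>R. \<forall>u s. c u s \<noteq> 0 \<longrightarrow> norm (rvec u) \<le> R"
    and c_drift: "\<And>s. (\<Sum>\<^sub>\<infinity>u. c u s *\<^sub>R rvec u) = bc"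
  defines "b \<equiv> (\<Sum>\<^sub>\<infinity>u. P0 u *\<^sub>R rvec u) + bc"
    and "Pbar \<equiv> (\<lambda>u. P0 u + (\<Sum>s\<in>UNIV. pmf \<pi> s * c u s))"
  defines "\<eta>2 \<equiv> (\<chi> i j. \<Sum>\<^sub>\<infinity>u. (rvec u $ i - b $ i) * (rvec u $ j - b $ j) * Pbar u)"
  shows "(\<lambda>t. (1 / real t) *\<^sub>R second_moment b t (annealed_dist P0 c x0 \<pi> t)) \<longlonglongrightarrow> \<eta>2 \<and>
         (AE \<xi> in env_law \<pi>.
           (\<lambda>t. (1 / real t) *\<^sub>R second_moment b t (measure_pmf (quenched_dist P0 c x0 \<xi> t)))
             \<longlonglongrightarrow> \<eta>2)"
proof -
  define F where "F = {u. P0 u \<noteq> 0 \<or> (\<exists>s. c u s \<noteq> 0)}"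
  have finite_F: "finite F"
    unfolding F_def using P0_range c_range by (rule finite_jump_support)
  have outside: "P0 u = 0" "c u s = 0" if "u \<notin> F" for u s
    using that by (auto simp: F_def)
  have infsum_F: "infsum f UNIV = sum f F" if "\<And>u. u \<notin> F \<Longrightarrow> f u = 0"
    for f :: "_ \<Rightarrow> 'a::{topological_ab_group_add,t2_space}"
    using infsum_eq_sum_superset[OF finite_F that] .
  have pmf_jump: "pmf (jump_pmf P0 c s) u = P0 u + c u s" for s u
    using P0_sum c_sum[of s] Pc_bounds outside
    by (intro pmf_jump_pmf[OF _ finite_F]) (simp_all add: infsum_F sum.distrib)
  have mean_jump: "(\<Sum>u\<in>F. pmf (jump_pmf P0 c s) u *\<^sub>R rvec u) = b" for s
    using c_drift[of s] outside
    by (simp add: b_def pmf_jump infsum_F scaleR_add_left sum.distrib)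
  have set_pmf_jump: "set_pmf (jump_pmf P0 c s) \<subseteq> F" for s
    using outside by (fastforce simp: set_pmf_eq pmf_jump)
  interpret rwre \<pi> P0 c x0 F b
    using finite_F set_pmf_jump mean_jump by unfold_locales
  have "\<eta>2 = (\<chi> i j. mean_cov i j)"
    using outside
    by (simp add: \<eta>2_def Pbar_def mean_cov_def jump_cov_def pmf_jump infsum_F sum_mixture_swap)
  then show ?thesis using second_moment_limits by simp
qed

end
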